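(* There is a family of MaxSAT instances $F_n$ encoded with blocking variables, with $O(n)$ variables, $O(n)$ clauses and $\mathrm{cost}(F_n)=\Omega(n)$, such that every derivation in the cost-SR calculus from $F_n$ that proves $\mathrm{cost}(F_n)\ge 1$ (i.e. contains a unit clause $b$ for some blocking variable $b$) contains a clause $C$ introduced by the cost-SR rule whose witnessing substitution $\sigma$ has $\mathrm{flip}(C,\sigma)=\Omega(n)$.
   Context: Literals, clauses, CNFs (multisets of clauses), $\mathrm{Var}(\Gamma)$. A substitution $\sigma$ maps variables to $0$, $1$ or literals, extended by $\sigma(\lnot x)=\lnot\sigma(x)$, $\sigma(0)=0$, $\sigma(1)=1$; $(\sigma\circ\tau)(x)=\sigma(\tau(x))$. A (partial) assignment has $\sigma(x)\in\{0,1,x\}$; total means all variables assigned. $C{\upharpoonright}_\sigma$: apply $\sigma$ to literals and simplify; $\Gamma{\upharpoonright}_\sigma$ is the multiset of $C{\upharpoonright}_\sigma\ne1$, $C\in\Gamma$. $\lnot C$ is the partial assignment falsifying all literals of $C$; $\tau\supseteq\rho$ means extension. $\Gamma\vdash_1 C$ means unit propagation on $\Gamma{\upharpoonright}_{\lnot C}$ derives the empty clause; $\Gamma\vdash_1\Delta$ means this for all $D\in\Delta$. A MaxSAT instance encoded with blocking variables is a CNF $\Gamma=H\cup\{C_1\lor b_1,\dots,C_m\lor b_m\}$ with distinct fresh blocking variables $b_i$; $\mathrm{cost}(\alpha)=\sum_i\alpha(b_i)$; $\mathrm{cost}(\Gamma)=\min\{\mathrm{cost}(\alpha):\alpha\models\Gamma\}$.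 $C$ is cost-SR w.r.t. $\Gamma$ via $\sigma$ if (1) $\Gamma{\upharpoonright}_{\lnot C}\vdash_1(\Gamma\cup\{C\}){\upharpoonright}_\sigma$ and (2) $\mathrm{cost}(\tau\circ\sigma)\le\mathrm{cost}(\tau)$ for all total $\tau\supseteq\lnot C$. A cost-SR calculus derivation from $\Gamma$: sequence $D_1,\dots,D_t$, each in $\Gamma$, or by weakening/resolution from earlier clauses, or cost-SR w.r.t. $\Gamma\cup\{D_1,\dots,D_{i-1}\}$ with $\mathrm{Var}(D_i)\subseteq\mathrm{Var}(\Gamma)$ (witness attached). $\mathrm{flip}(C,\sigma)=\max_{\tau\supseteq\lnot C}\mathrm{HD}(\tau,\tau\circ\sigma)$ over total $\tau$, with $\mathrm{HD}$ the Hamming distance. *)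

theory Defs
  imports Complex_Main "HOL-Library.Multiset"
begin

datatype lit = Pos nat | Neg nat

fun var_of :: "lit \<Rightarrow> nat" where
  "var_of (Pos x) = x" | "var_of (Neg x) = x"

fun negl :: "lit \<Rightarrow> lit" where
  "negl (Pos x) = Neg x" | "negl (Neg x) = Pos x"

type_synonym clause = "lit set"
type_synonym cnf = "clause multiset"

definition vars_clause :: "clause \<Rightarrow> nat set" where
  "vars_clause C = var_of ` C"

definition vars_cnf :: "cnf \<Rightarrow> nat set" where
  "vars_cnf \<Gamma> = (\<Union>C \<in> set_mset \<Gamma>. vars_clause C)"

datatype sval = Const bool | L lit

type_synonym subst = "nat \<Rightarrow> sval"

fun neg_sval :: "sval \<Rightarrow> sval" where
  "neg_sval (Const b) = Const (\<not> b)" | "neg_sval (L l) = L (negl l)"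

fun app_lit :: "subst \<Rightarrow> lit \<Rightarrow> sval" where
  "app_lit \<sigma> (Pos x) = \<sigma> x" | "app_lit \<sigma> (Neg x) = neg_sval (\<sigma> x)"

text \<open>Restriction of a clause: None if it becomes 1 (satisfied), otherwise the
  simplified clause (literals mapped to 0 are removed).\<close>
definition restrict_clause :: "subst \<Rightarrow> clause \<Rightarrow> clause option" where
  "restrict_clause \<sigma> C =
     (if \<exists>l\<in>C. app_lit \<sigma> l = Const True then None
      else Some {l'. \<exists>l\<in>C. app_lit \<sigma> l = L l'})"

definition restrict_cnf :: "subst \<Rightarrow> cnf \<Rightarrow> cnf" where
  "restrict_cnf \<sigma> \<Gamma> =
     image_mset (\<lambda>C. the (restrict_clause \<sigma> C))
       (filter_mset (\<lambda>C. restrict_clause \<sigma> C \<noteq> None) \<Gamma>)"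

text \<open>The partial assignment falsifying all literals of C (as a substitution
  that is the identity on unassigned variables).\<close>
definition neg_clause :: "clause \<Rightarrow> subst" where
  "neg_clause C x =
     (if Pos x \<in> C then Const False else if Neg x \<in> C then Const True else L (Pos x))"

fun lit_val :: "(nat \<Rightarrow> bool) \<Rightarrow> lit \<Rightarrow> bool" where
  "lit_val \<tau> (Pos x) = \<tau> x" | "lit_val \<tau> (Neg x) = (\<not> \<tau> x)"

fun eval_sval :: "(nat \<Rightarrow> bool) \<Rightarrow> sval \<Rightarrow> bool" where
  "eval_sval \<tau> (Const b) = b" | "eval_sval \<tau> (L l) = lit_val \<tau> l"

definition comp_asg :: "(nat \<Rightarrow> bool) \<Rightarrow> subst \<Rightarrow> (nat \<Rightarrow> bool)" where
  "comp_asg \<tau> \<sigma> x = eval_sval \<tau> (\<sigma> x)"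

definition extends_neg :: "(nat \<Rightarrow> bool) \<Rightarrow> clause \<Rightarrow> bool" where
  "extends_neg \<tau> C \<longleftrightarrow> (\<forall>l\<in>C. \<not> lit_val \<tau> l)"

definition models :: "(nat \<Rightarrow> bool) \<Rightarrow> cnf \<Rightarrow> bool" where
  "models \<alpha> \<Gamma> \<longleftrightarrow> (\<forall>C \<in># \<Gamma>. \<exists>l\<in>C. lit_val \<alpha> l)"

definition subst_over :: "nat set \<Rightarrow> subst \<Rightarrow> bool" where
  "subst_over V \<sigma> \<longleftrightarrow>
     (\<forall>x\<in>V. (\<exists>b. \<sigma> x = Const b) \<or> (\<exists>l. \<sigma> x = L l \<and> var_of l \<in> V)) \<and>
     (\<forall>x. x \<notin> V \<longrightarrow> \<sigma> x = L (Pos x))"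

inductive_set up_true :: "cnf \<Rightarrow> lit set" for \<Gamma> :: cnf where
  unit: "C \<in># \<Gamma> \<Longrightarrow> l \<in> C \<Longrightarrow> (\<forall>l'\<in>C. l' \<noteq> l \<longrightarrow> negl l' \<in> up_true \<Gamma>)
         \<Longrightarrow> l \<in> up_true \<Gamma>"

definition up_refutes :: "cnf \<Rightarrow> bool" where
  "up_refutes \<Gamma> \<longleftrightarrow> (\<exists>C \<in># \<Gamma>. \<forall>l\<in>C. negl l \<in> up_true \<Gamma>)"

definition up_implies :: "cnf \<Rightarrow> clause \<Rightarrow> bool" where
  "up_implies \<Gamma> C \<longleftrightarrow> up_refutes (restrict_cnf (neg_clause C) \<Gamma>)"

definition up_implies_all :: "cnf \<Rightarrow> cnf \<Rightarrow> bool" where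
  "up_implies_all \<Gamma> \<Delta> \<longleftrightarrow> (\<forall>D \<in># \<Delta>. up_implies \<Gamma> D)"

text \<open>An instance: hard clauses H and soft clauses given as pairs (C_i, b_i).\<close>
record maxsat =
  hard :: cnf
  soft :: "(clause \<times> nat) list"

definition cnf_of :: "maxsat \<Rightarrow> cnf" where
  "cnf_of F = hard F + mset (map (\<lambda>(C, b). insert (Pos b) C) (soft F))"

definition blocking :: "maxsat \<Rightarrow> nat set" where
  "blocking F = snd ` set (soft F)"

definition wf_maxsat :: "maxsat \<Rightarrow> bool" where
  "wf_maxsat F \<longleftrightarrow>
     (\<forall>C \<in># hard F. finite C) \<and> (\<forall>(C, b) \<in> set (soft F). finite C) \<and>
     distinct (map snd (soft F)) \<and>
     (\<forall>b \<in> blocking F. b \<notin> vars_cnf (hard F) \<and>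
        (\<forall>(C, b') \<in> set (soft F). b \<notin> vars_clause C))"

definition cost :: "maxsat \<Rightarrow> (nat \<Rightarrow> bool) \<Rightarrow> nat" where
  "cost F \<alpha> = card {b \<in> blocking F. \<alpha> b}"

text \<open>cost(Gamma) = min cost of a model (0 if there is none, Inf {} = 0 on nat).\<close>
definition maxsat_cost :: "maxsat \<Rightarrow> nat" where
  "maxsat_cost F = Inf (cost F ` {\<alpha>. models \<alpha> (cnf_of F)})"

definition cost_sr :: "maxsat \<Rightarrow> cnf \<Rightarrow> clause \<Rightarrow> subst \<Rightarrow> bool" where
  "cost_sr F \<Gamma> C \<sigma> \<longleftrightarrow>
     up_implies_all (restrict_cnf (neg_clause C) \<Gamma>) (restrict_cnf \<sigma> (\<Gamma> + {#C#})) \<and>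
     (\<forall>\<tau>. extends_neg \<tau> C \<longrightarrow> cost F (comp_asg \<tau> \<sigma>) \<le> cost F \<tau>)"

definition hamming :: "nat set \<Rightarrow> (nat \<Rightarrow> bool) \<Rightarrow> (nat \<Rightarrow> bool) \<Rightarrow> nat" where
  "hamming V \<tau> \<tau>' = card {x \<in> V. \<tau> x \<noteq> \<tau>' x}"

definition flip :: "nat set \<Rightarrow> clause \<Rightarrow> subst \<Rightarrow> nat" where
  "flip V C \<sigma> = Sup {hamming V \<tau> (comp_asg \<tau> \<sigma>) | \<tau>. extends_neg \<tau> C}"

datatype just = Ax | Weak nat | Res nat nat | SR subst

definition resolvent :: "clause \<Rightarrow> clause \<Rightarrow> clause \<Rightarrow> bool" where
  "resolvent A B D \<longleftrightarrow> (\<exists>l. l \<in> A \<and> negl l \<in> B \<and> D = (A - {l}) \<union> (B - {negl l}))"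

definition valid_step :: "maxsat \<Rightarrow> (clause \<times> just) list \<Rightarrow> nat \<Rightarrow> bool" where
  "valid_step F ds i \<longleftrightarrow>
    (let D = fst (ds ! i); prev = mset (map fst (take i ds)) in
     finite D \<and>
     (case snd (ds ! i) of
        Ax \<Rightarrow> D \<in># cnf_of F
      | Weak j \<Rightarrow> j < i \<and> fst (ds ! j) \<subseteq> D
      | Res j k \<Rightarrow> j < i \<and> k < i \<and> resolvent (fst (ds ! j)) (fst (ds ! k)) D
      | SR \<sigma> \<Rightarrow> vars_clause D \<subseteq> vars_cnf (cnf_of F) \<and>
                 subst_over (vars_cnf (cnf_of F)) \<sigma> \<and>
                 cost_sr F (cnf_of F + prev) D \<sigma>))"

definition derivation :: "maxsat \<Rightarrow> (clause \<times> just) list \<Rightarrow> bool" where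
  "derivation F ds \<longleftrightarrow> (\<forall>i < length ds. valid_step F ds i)"

end

theory Submission
  imports Defs
begin

(* F_n consists of n soft copies of a unit clause x and n soft copies of its negation.
   Every model pays at least n, and the models of cost n are, on the variables of F_n, exactly
   the two parity assignments, which disagree on every variable. Weakening and resolution
   preserve satisfaction by a fixed assignment. If a cost-SR step adds a clause C falsified by
   an optimal model tau of the clauses before it, then tau o sigma is an optimal model satisfying
   C, hence the other parity assignment, so the step flips all 2n+1 variables. A unit clause b is
   falsified by one of the two parity assignments, so every derivation of it contains such a
   step. *)

definition sat_clause :: "(nat \<Rightarrow> bool) \<Rightarrow> clause \<Rightarrow> bool" where
  "sat_clause \<alpha> C \<longleftrightarrow> (\<exists>l\<in>C. lit_val \<alpha> l)"

lemma models_iff_sat_clause: "models \<alpha> \<Gamma> \<longleftrightarrow> (\<forall>C\<in>#\<Gamma>. sat_clause \<alpha> C)"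
  by (simp add: models_def sat_clause_def)

lemma sat_clause_cong:
  assumes "vars_clause C \<subseteq> V" and "\<And>x. x \<in> V \<Longrightarrow> \<alpha> x = \<beta> x"
  shows "sat_clause \<alpha> C \<longleftrightarrow> sat_clause \<beta> C"
proof -
  have "lit_val \<alpha> l = lit_val \<beta> l" if "l \<in> C" for l
    using assms that by (cases l) (auto simp: vars_clause_def)
  then show ?thesis
    by (auto simp: sat_clause_def)
qed

lemma lit_val_negl [simp]: "lit_val \<alpha> (negl l) = (\<not> lit_val \<alpha> l)"
  by (cases l) auto

lemma eval_sval_neg_sval [simp]: "eval_sval \<alpha> (neg_sval s) = (\<not> eval_sval \<alpha> s)"
  by (cases s) auto

lemma eval_sval_app_lit: "eval_sval \<alpha> (app_lit \<sigma> l) = lit_val (comp_asg \<alpha> \<sigma>) l"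
  by (cases l) (auto simp: comp_asg_def)

lemma sat_clause_comp_if_restrict_None:
  "restrict_clause \<sigma> C = None \<Longrightarrow> sat_clause (comp_asg \<alpha> \<sigma>) C"
  unfolding restrict_clause_def sat_clause_def
  by (metis eval_sval_app_lit eval_sval.simps(1) option.distinct(1))

lemma sat_clause_restrict_Some:
  assumes "restrict_clause \<sigma> C = Some D"
  shows "sat_clause \<alpha> D \<longleftrightarrow> sat_clause (comp_asg \<alpha> \<sigma>) C"
proof -
  have not_true: "\<forall>l\<in>C. app_lit \<sigma> l \<noteq> Const True"
    and D: "D = {l'. \<exists>l\<in>C. app_lit \<sigma> l = L l'}"
    using assms unfolding restrict_clause_def by (auto split: if_splits)
  have "eval_sval \<alpha> (app_lit \<sigma> l) \<longleftrightarrow> (\<exists>l'. app_lit \<sigma> l = L l' \<and> lit_val \<alpha> l')"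
    if "l \<in> C" for l
    using not_true that by (cases "app_lit \<sigma> l") auto
  then show ?thesis
    by (auto simp: D sat_clause_def eval_sval_app_lit[symmetric])
qed

lemma models_restrict_cnf: "models \<alpha> (restrict_cnf \<sigma> \<Gamma>) \<longleftrightarrow> models (comp_asg \<alpha> \<sigma>) \<Gamma>"
proof -
  have "models \<alpha> (restrict_cnf \<sigma> \<Gamma>) \<longleftrightarrow>
        (\<forall>C\<in>#\<Gamma>. \<forall>D. restrict_clause \<sigma> C = Some D \<longrightarrow> sat_clause \<alpha> D)"
    by (force simp: models_iff_sat_clause restrict_cnf_def)
  also have "\<dots> \<longleftrightarrow> models (comp_asg \<alpha> \<sigma>) \<Gamma>"
    unfolding models_iff_sat_clause
    by (metis not_Some_eq sat_clause_comp_if_restrict_None sat_clause_restrict_Some)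
  finally show ?thesis .
qed

lemma comp_asg_neg_clause: "extends_neg \<alpha> C \<Longrightarrow> comp_asg \<alpha> (neg_clause C) = \<alpha>"
  by (rule ext) (force simp: comp_asg_def neg_clause_def extends_neg_def)

lemma up_true_sound: "l \<in> up_true \<Gamma> \<Longrightarrow> models \<alpha> \<Gamma> \<Longrightarrow> lit_val \<alpha> l"
proof (induction rule: up_true.induct)
  case (unit C l)
  then obtain l' where "l' \<in> C" "lit_val \<alpha> l'"
    unfolding models_def by auto
  with unit show ?case by (metis lit_val_negl)
qed

lemma not_up_refutes_if_models: "models \<alpha> \<Gamma> \<Longrightarrow> \<not> up_refutes \<Gamma>"
  unfolding up_refutes_def by (metis lit_val_negl models_def up_true_sound)

lemma sat_clause_if_up_implies:
  assumes "models \<alpha> \<Gamma>" and "up_implies \<Gamma> C"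
  shows "sat_clause \<alpha> C"
proof (rule ccontr)
  assume "\<not> sat_clause \<alpha> C"
  then have "comp_asg \<alpha> (neg_clause C) = \<alpha>"
    by (intro comp_asg_neg_clause) (auto simp: extends_neg_def sat_clause_def)
  then have "models \<alpha> (restrict_cnf (neg_clause C) \<Gamma>)"
    using assms(1) by (simp add: models_restrict_cnf)
  then show False
    using assms(2) not_up_refutes_if_models unfolding up_implies_def by blast
qed

lemma cost_sr_sound:
  assumes "models \<alpha> \<Gamma>" and "extends_neg \<alpha> C" and "cost_sr F \<Gamma> C \<sigma>"
  shows "models (comp_asg \<alpha> \<sigma>) (\<Gamma> + {#C#})" and "cost F (comp_asg \<alpha> \<sigma>) \<le> cost F \<alpha>"
proof -
  have "models \<alpha> (restrict_cnf (neg_clause C) \<Gamma>)"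
    using assms(1) comp_asg_neg_clause[OF assms(2)] by (simp add: models_restrict_cnf)
  then have "models \<alpha> (restrict_cnf \<sigma> (\<Gamma> + {#C#}))"
    using assms(3) sat_clause_if_up_implies
    unfolding cost_sr_def up_implies_all_def models_iff_sat_clause by blast
  then show "models (comp_asg \<alpha> \<sigma>) (\<Gamma> + {#C#})"
    by (simp add: models_restrict_cnf)
  show "cost F (comp_asg \<alpha> \<sigma>) \<le> cost F \<alpha>"
    using assms(2,3) unfolding cost_sr_def by blast
qed

lemma hamming_le_flip:
  assumes "finite V" and "extends_neg \<tau> C"
  shows "hamming V \<tau> (comp_asg \<tau> \<sigma>) \<le> flip V C \<sigma>"
  unfolding flip_def
proof (rule cSup_upper)
  show "bdd_above {hamming V \<tau> (comp_asg \<tau> \<sigma>) |\<tau>. extends_neg \<tau> C}"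
    unfolding bdd_above_def hamming_def
    by (rule exI[of _ "card V"]) (auto intro: card_mono assms(1))
qed (use assms(2) in blast)

lemma sat_clause_resolvent:
  assumes "resolvent A B D" and "sat_clause \<alpha> A" and "sat_clause \<alpha> B"
  shows "sat_clause \<alpha> D"
proof -
  obtain l where l: "l \<in> A" "negl l \<in> B" and D: "D = (A - {l}) \<union> (B - {negl l})"
    using assms(1) unfolding resolvent_def by blast
  show ?thesis
  proof (cases "lit_val \<alpha> l")
    case True
    with assms(3) obtain l' where "l' \<in> B" "lit_val \<alpha> l'" "l' \<noteq> negl l"
      unfolding sat_clause_def by force
    then show ?thesis unfolding D sat_clause_def by blast
  next
    case False
    with assms(2) obtain l' where "l' \<in> A" "lit_val \<alpha> l'" "l' \<noteq> l"
      unfolding sat_clause_def by force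
    then show ?thesis unfolding D sat_clause_def by blast
  qed
qed

lemma derivation_sat_clause:
  assumes der: "derivation F ds" and model: "models \<alpha> (cnf_of F)"
    and SR_step: "\<And>i \<sigma>. i < length ds \<Longrightarrow> snd (ds ! i) = SR \<sigma> \<Longrightarrow>
       models \<alpha> (cnf_of F + mset (map fst (take i ds))) \<Longrightarrow> sat_clause \<alpha> (fst (ds ! i))"
  shows "i < length ds \<Longrightarrow> sat_clause \<alpha> (fst (ds ! i))"
proof (induction i rule: less_induct)
  case (less i)
  have step: "valid_step F ds i"
    using der less.prems unfolding derivation_def by blast
  have earlier: "sat_clause \<alpha> (fst (ds ! j))" if "j < i" for j
    using less.IH less.prems that by simp
  show ?case
  proof (cases "snd (ds ! i)")
    case Ax
    then show ?thesis
      using step model unfolding valid_step_def Let_def models_iff_sat_clause by simp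
  next
    case (Weak j)
    then have "j < i" "fst (ds ! j) \<subseteq> fst (ds ! i)"
      using step unfolding valid_step_def Let_def by simp_all
    with earlier[of j] show ?thesis
      unfolding sat_clause_def by blast
  next
    case (Res j k)
    then have "j < i" "k < i" "resolvent (fst (ds ! j)) (fst (ds ! k)) (fst (ds ! i))"
      using step unfolding valid_step_def Let_def by simp_all
    with earlier[of j] earlier[of k] show ?thesis
      using sat_clause_resolvent by blast
  next
    case (SR \<sigma>)
    have "sat_clause \<alpha> C" if C: "C \<in> set (map fst (take i ds))" for C
    proof -
      obtain j where "j < i" "C = fst (ds ! j)"
        using C less.prems by (auto simp: in_set_conv_nth)
      with earlier show ?thesis by blast
    qed
    then have "models \<alpha> (cnf_of F + mset (map fst (take i ds)))"
      using model by (auto simp: models_iff_sat_clause)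
    then show ?thesis
      by (rule SR_step[OF less.prems SR])
  qed
qed

definition opposing_units :: "nat \<Rightarrow> maxsat" where
  "opposing_units n =
     \<lparr>hard = {#}, soft = map (\<lambda>b. ({if odd b then Pos 0 else Neg 0}, b)) [1..<2*n+1]\<rparr>"

definition parity_assignment :: "bool \<Rightarrow> nat \<Rightarrow> bool" where
  "parity_assignment c x \<longleftrightarrow> odd x \<noteq> c"

lemma blocking_opposing_units: "blocking (opposing_units n) = {1..2*n}"
  by (auto simp: blocking_def opposing_units_def image_image)

lemma cnf_of_opposing_units:
  "cnf_of (opposing_units n) = mset (map (\<lambda>b. {Pos b, if odd b then Pos 0 else Neg 0}) [1..<2*n+1])"
  by (simp add: cnf_of_def opposing_units_def comp_def)

lemma size_cnf_of_opposing_units: "size (cnf_of (opposing_units n)) = 2 * n"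
  by (simp add: cnf_of_opposing_units)

lemma vars_cnf_opposing_units:
  assumes "0 < n"
  shows "vars_cnf (cnf_of (opposing_units n)) = {..2*n}"
proof -
  have "vars_clause {Pos b, if odd b then Pos 0 else Neg 0} = {b, 0}" for b
    by (simp add: vars_clause_def)
  then have "vars_cnf (cnf_of (opposing_units n)) = (\<Union>b\<in>{1..2*n}. {b, 0})"
    by (simp add: cnf_of_opposing_units vars_cnf_def atLeastLessThanSuc_atLeastAtMost del: upt_Suc)
  also have "\<dots> = insert 0 {1..2*n}"
    using assms by (auto simp: Suc_le_eq) presburger
  also have "\<dots> = {..2*n}"
    by auto
  finally show ?thesis .
qed

lemma wf_maxsat_opposing_units: "wf_maxsat (opposing_units n)"
  unfolding wf_maxsat_def blocking_opposing_units
  by (auto simp: opposing_units_def vars_clause_def vars_cnf_def comp_def)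

lemma models_opposing_units:
  "models \<alpha> (cnf_of (opposing_units n)) \<longleftrightarrow> (\<forall>b\<in>{1..2*n}. \<alpha> b \<or> \<alpha> 0 = odd b)"
  by (auto simp: models_def cnf_of_opposing_units)

lemma cost_opposing_units: "cost (opposing_units n) \<alpha> = card ({1..2*n} \<inter> Collect \<alpha>)"
  by (simp add: cost_def blocking_opposing_units Int_def)

lemma card_parity_assignment: "card ({1..2*n} \<inter> Collect (parity_assignment c)) = n"
proof (induction n)
  case (Suc n)
  have "{1..2 * Suc n} = {1..2*n} \<union> {2*n+1, 2*n+2}"
    by auto
  then have "{1..2 * Suc n} \<inter> Collect (parity_assignment c) =
      {1..2*n} \<inter> Collect (parity_assignment c) \<union> (if c then {2*n+2} else {2*n+1})"
    by (auto simp: parity_assignment_def)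
  then show ?case
    using Suc by (simp add: card_Un_disjoint)
qed simp

lemma models_parity_assignment: "models (parity_assignment c) (cnf_of (opposing_units n))"
  by (auto simp: models_opposing_units parity_assignment_def)

lemma cost_parity_assignment: "cost (opposing_units n) (parity_assignment c) = n"
  unfolding cost_opposing_units by (rule card_parity_assignment)

lemma parity_assignment_blocking_subset:
  assumes "models \<alpha> (cnf_of (opposing_units n))"
  shows "{1..2*n} \<inter> Collect (parity_assignment (\<alpha> 0)) \<subseteq> {1..2*n} \<inter> Collect \<alpha>"
  using assms by (auto simp: models_opposing_units parity_assignment_def)

lemma cost_opposing_units_ge:
  assumes "models \<alpha> (cnf_of (opposing_units n))"
  shows "n \<le> cost (opposing_units n) \<alpha>"
  using card_mono[OF _ parity_assignment_blocking_subset[OF assms]] card_parity_assignment[of n "\<alpha> 0"]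
  by (simp add: cost_opposing_units)

lemma maxsat_cost_opposing_units: "maxsat_cost (opposing_units n) = n"
  unfolding maxsat_cost_def
proof (rule cInf_eq_minimum)
  show "n \<in> cost (opposing_units n) ` {\<alpha>. models \<alpha> (cnf_of (opposing_units n))}"
    using models_parity_assignment cost_parity_assignment by (metis image_eqI mem_Collect_eq)
qed (use cost_opposing_units_ge in blast)

lemma optimal_model_opposing_units:
  assumes "models \<alpha> (cnf_of (opposing_units n))" and "cost (opposing_units n) \<alpha> \<le> n"
    and "x \<le> 2*n"
  shows "\<alpha> x = parity_assignment (\<alpha> 0) x"
proof -
  have le: "card ({1..2*n} \<inter> Collect \<alpha>) \<le> card ({1..2*n} \<inter> Collect (parity_assignment (\<alpha> 0)))"
    using assms(2) card_parity_assignment[of n "\<alpha> 0"] by (simp add: cost_opposing_units)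
  have sub: "{1..2*n} \<inter> Collect (parity_assignment (\<alpha> 0)) \<subseteq> {1..2*n} \<inter> Collect \<alpha>"
    using assms(1) by (rule parity_assignment_blocking_subset)
  have "card ({1..2*n} \<inter> Collect (parity_assignment (\<alpha> 0))) \<le> card ({1..2*n} \<inter> Collect \<alpha>)"
    by (rule card_mono[OF _ sub]) simp
  with le have eq: "{1..2*n} \<inter> Collect (parity_assignment (\<alpha> 0)) = {1..2*n} \<inter> Collect \<alpha>"
    by (intro card_subset_eq[OF _ sub]) simp_all
  show ?thesis
  proof (cases "x = 0")
    case True
    then show ?thesis by (simp add: parity_assignment_def)
  next
    case False
    with assms(3) have "x \<in> {1..2*n}" by simp
    with eq show ?thesis by blast
  qed
qed

lemma cost_sr_flip_opposing_units:
  fixes n :: nat and V :: "nat set"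
  defines "V \<equiv> vars_cnf (cnf_of (opposing_units n))"
  assumes "0 < n"
    and model: "models (parity_assignment c) (cnf_of (opposing_units n) + P)"
    and falsified: "\<not> sat_clause (parity_assignment c) D"
    and vars: "vars_clause D \<subseteq> V"
    and sr: "cost_sr (opposing_units n) (cnf_of (opposing_units n) + P) D \<sigma>"
  shows "2*n + 1 \<le> flip V D \<sigma>"
proof -
  let ?\<tau> = "parity_assignment c"
  define \<tau>' where "\<tau>' = comp_asg ?\<tau> \<sigma>"
  have V: "V = {..2*n}"
    unfolding V_def using \<open>0 < n\<close> by (rule vars_cnf_opposing_units)
  have neg: "extends_neg ?\<tau> D"
    using falsified by (auto simp: extends_neg_def sat_clause_def)
  have "models \<tau>' (cnf_of (opposing_units n) + P + {#D#})"
    and "cost (opposing_units n) \<tau>' \<le> cost (opposing_units n) ?\<tau>"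
    unfolding \<tau>'_def using cost_sr_sound[OF model neg sr] by blast+
  then have model': "models \<tau>' (cnf_of (opposing_units n))" and sat': "sat_clause \<tau>' D"
    and cost': "cost (opposing_units n) \<tau>' \<le> n"
    by (auto simp: models_iff_sat_clause cost_parity_assignment)
  have optimal: "\<tau>' x = parity_assignment (\<tau>' 0) x" if "x \<in> V" for x
    using that V by (intro optimal_model_opposing_units[OF model' cost']) simp
  have "\<tau>' 0 \<noteq> c"
  proof
    assume "\<tau>' 0 = c"
    then have "\<tau>' x = ?\<tau> x" if "x \<in> V" for x
      using optimal[OF that] by simp
    then have "sat_clause ?\<tau> D"
      using sat_clause_cong[OF vars] sat' by blast
    with falsified show False ..
  qed
  then have "{x\<in>V. ?\<tau> x \<noteq> \<tau>' x} = V"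
    using optimal by (auto simp: parity_assignment_def)
  then have "hamming V ?\<tau> \<tau>' = 2*n + 1"
    by (simp add: hamming_def V)
  moreover have "hamming V ?\<tau> \<tau>' \<le> flip V D \<sigma>"
    unfolding \<tau>'_def using V neg by (intro hamming_le_flip) simp_all
  ultimately show ?thesis
    by simp
qed

lemma derivation_opposing_units_flip:
  fixes n :: nat and V :: "nat set"
  defines "V \<equiv> vars_cnf (cnf_of (opposing_units n))"
  assumes "0 < n" and der: "derivation (opposing_units n) ds"
    and unit: "{Pos b} \<in> fst ` set ds"
  shows "\<exists>i < length ds. \<exists>\<sigma>. snd (ds ! i) = SR \<sigma> \<and> 2*n + 1 \<le> flip V (fst (ds ! i)) \<sigma>"
proof (rule ccontr)
  assume small: "\<not> ?thesis"
  have "sat_clause (parity_assignment c) (fst (ds ! i))" if "i < length ds" for c i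
  proof (rule derivation_sat_clause[OF der models_parity_assignment _ that])
    fix i \<sigma>
    assume i: "i < length ds" and SR: "snd (ds ! i) = SR \<sigma>"
      and model: "models (parity_assignment c) (cnf_of (opposing_units n) + mset (map fst (take i ds)))"
    have "valid_step (opposing_units n) ds i"
      using der i by (simp add: derivation_def)
    then have "vars_clause (fst (ds ! i)) \<subseteq> V"
      and "cost_sr (opposing_units n) (cnf_of (opposing_units n) + mset (map fst (take i ds)))
             (fst (ds ! i)) \<sigma>"
      using SR by (simp_all add: valid_step_def Let_def V_def)
    with small i SR show "sat_clause (parity_assignment c) (fst (ds ! i))"
      using cost_sr_flip_opposing_units[OF \<open>0 < n\<close> model] unfolding V_def by blast
  qed
  moreover obtain i where "i < length ds" and "fst (ds ! i) = {Pos b}"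
    using unit by (auto simp: in_set_conv_nth)
  ultimately have "parity_assignment c b" for c
    by (metis sat_clause_def singletonD lit_val.simps(1))
  from this[of "odd b"] show False
    by (simp add: parity_assignment_def)
qed

theorem corollary5p3:
  shows "\<exists>F :: nat \<Rightarrow> maxsat.
     (\<forall>n. wf_maxsat (F n)) \<and>
     (\<exists>c::real. \<exists>N. \<forall>n\<ge>N. real (card (vars_cnf (cnf_of (F n)))) \<le> c * real n) \<and>
     (\<exists>c::real. \<exists>N. \<forall>n\<ge>N. real (size (cnf_of (F n))) \<le> c * real n) \<and>
     (\<exists>c::real. c > 0 \<and> (\<exists>N. \<forall>n\<ge>N. real (maxsat_cost (F n)) \<ge> c * real n)) \<and>
     (\<exists>c::real. c > 0 \<and> (\<exists>N. \<forall>n\<ge>N. \<forall>ds.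
        derivation (F n) ds \<longrightarrow>
        (\<exists>b \<in> blocking (F n). {Pos b} \<in> fst ` set ds) \<longrightarrow>
        (\<exists>i < length ds. \<exists>\<sigma>. snd (ds ! i) = SR \<sigma> \<and>
           real (flip (vars_cnf (cnf_of (F n))) (fst (ds ! i)) \<sigma>) \<ge> c * real n)))"
proof (intro exI[of _ opposing_units] conjI)
  show "\<forall>n. wf_maxsat (opposing_units n)"
    by (simp add: wf_maxsat_opposing_units)
  show "\<exists>c::real. \<exists>N. \<forall>n\<ge>N. real (card (vars_cnf (cnf_of (opposing_units n)))) \<le> c * real n"
    by (intro exI[of _ 3] exI[of _ 1]) (simp add: vars_cnf_opposing_units)
  show "\<exists>c::real. \<exists>N. \<forall>n\<ge>N. real (size (cnf_of (opposing_units n))) \<le> c * real n"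
    by (intro exI[of _ 2] exI[of _ 0]) (simp add: size_cnf_of_opposing_units)
  show "\<exists>c::real. c > 0 \<and> (\<exists>N. \<forall>n\<ge>N. real (maxsat_cost (opposing_units n)) \<ge> c * real n)"
    by (intro exI[of _ 1] conjI exI[of _ 0]) (simp_all add: maxsat_cost_opposing_units)
  have "\<exists>i < length ds. \<exists>\<sigma>. snd (ds ! i) = SR \<sigma> \<and>
      real n \<le> real (flip (vars_cnf (cnf_of (opposing_units n))) (fst (ds ! i)) \<sigma>)"
    if "1 \<le> n" and "derivation (opposing_units n) ds"
      and "\<exists>b \<in> blocking (opposing_units n). {Pos b} \<in> fst ` set ds" for n ds
    using derivation_opposing_units_flip[of n ds] that by fastforce
  then show "\<exists>c::real. c > 0 \<and> (\<exists>N. \<forall>n\<ge>N. \<forall>ds.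
        derivation (opposing_units n) ds \<longrightarrow>
        (\<exists>b \<in> blocking (opposing_units n). {Pos b} \<in> fst ` set ds) \<longrightarrow>
        (\<exists>i < length ds. \<exists>\<sigma>. snd (ds ! i) = SR \<sigma> \<and>
           real (flip (vars_cnf (cnf_of (opposing_units n))) (fst (ds ! i)) \<sigma>) \<ge> c * real n))"
    by (intro exI[of _ "1::real"] conjI exI[of _ "1::nat"]) auto
qed

end
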